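(* Let $X\subset\mathbb R^2$ and let $U$ be a closed disk in the plane whose boundary is not contained in $X$. If $\alpha$ is an essential loop in $X$ whose image lies in $X\cap\operatorname{int}(U)$, then $\alpha$ cannot be freely homotoped in $X$ to a loop whose image is disjoint from $U\cap X$.
   Context: An essential loop is one that is not nullhomotopic in $X$. *)

theory Defs
  imports "HOL-Analysis.Analysis"
begin

definition essential :: "'a::real_normed_vector set \<Rightarrow> (real \<Rightarrow> 'a) \<Rightarrow> bool" where
  "essential X \<alpha> \<longleftrightarrow> path \<alpha> \<and> pathfinish \<alpha> = pathstart \<alpha> \<and> path_image \<alpha> \<subseteq> X \<and>
     \<not> (\<exists>a. homotopic_loops X \<alpha> (\<lambda>t. a))"

end

theory Submission
  imports Defs
begin

(* Spread the free homotopy from the loop \<alpha> (inside the disk) to \<beta> (outside it) radially over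
   an annulus, obtaining a map G into X that is \<alpha> on the outer circle and \<beta> on the inner one.
   A connected component C of the set where G meets the boundary circle separates the two
   boundary circles of the annulus. Since a point p of that circle is missing from X, G maps C
   into an arc, an absolute retract; so G|C extends into X over everything enclosed by C, while
   G is kept outside C. The result maps the disk into X and restricts to \<alpha> on its boundary,
   so \<alpha> is nullhomotopic. *)

lemma compact_connected_punctured_sphere_imp_AR:
  fixes Q :: "'a::euclidean_space set"
  assumes "DIM('a) = 2" "p \<in> sphere c r" "Q \<subseteq> sphere c r - {p}"
    and "compact Q" "connected Q" "Q \<noteq> {}"
  shows "AR Q"
proof -
  obtain b :: 'a where b: "b \<in> Basis"
    using nonempty_Basis by blast
  have "r > 0"
    using assms(2,3,6) by (cases "r = 0") (auto simp: sphere_def)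
  have "sphere c r - {p} homeomorphic {x. b \<bullet> x = 0}"
    using \<open>r > 0\<close> assms(2) b by (intro homeomorphic_punctured_sphere_hyperplane) auto
  also have "\<dots> homeomorphic (UNIV :: real set)"
    using nonzero_Basis[OF b] assms(1)
    by (intro homeomorphic_affine_sets) (auto simp: affine_hyperplane aff_dim_hyperplane)
  finally obtain f :: "'a \<Rightarrow> real" and g where "homeomorphism (sphere c r - {p}) UNIV f g"
    by (auto simp: homeomorphic_def)
  then have hom: "homeomorphism Q (f ` Q) f g"
    by (rule homeomorphism_of_subsets) (use assms(3) in auto)
  then have "compact (f ` Q)" "connected (f ` Q)"
    using assms(4,5) by (auto simp: homeomorphism_def intro: compact_continuous_image connected_continuous_image)
  then obtain u v where "f ` Q = {u..v}"
    using connected_compact_interval_1 by metis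
  moreover have "Q homeomorphic f ` Q"
    using hom by (auto simp: homeomorphic_def)
  ultimately show ?thesis
    using assms(6) by (metis convex_imp_AR convex_real_interval(5) homeomorphic_AR_iff_AR image_is_empty)
qed

lemma homotopic_sphere_maps_imp_punctured_space_map:
  fixes f g :: "'m::real_normed_vector \<Rightarrow> 'a::topological_space"
  assumes "homotopic_with_canon (\<lambda>h. True) (sphere 0 1) X f g"
  obtains G where "continuous_on (- {0}) G" "G ` (- {0}) \<subseteq> X"
    "\<And>z. norm z \<ge> 1 \<Longrightarrow> G z = f (sgn z)"
    "\<And>z. z \<noteq> 0 \<Longrightarrow> norm z \<le> 1/2 \<Longrightarrow> G z = g (sgn z)"
proof -
  obtain k where contk: "continuous_on ({0..1::real} \<times> sphere 0 1) k"
    and kX: "k \<in> {0..1} \<times> sphere 0 1 \<rightarrow> X"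
    and k0: "\<And>x. x \<in> sphere 0 1 \<Longrightarrow> k (0, x) = f x"
    and k1: "\<And>x. x \<in> sphere 0 1 \<Longrightarrow> k (1, x) = g x"
    using assms by (auto simp: homotopic_with)
  define G where "G z = k (max 0 (min 1 (2 - 2 * norm z)), sgn z)" for z :: 'm
  show thesis
  proof
    show "continuous_on (- {0}) G"
      unfolding G_def
      by (intro continuous_on_compose2 [OF contk] continuous_intros) (auto simp: norm_sgn)
    show "G ` (- {0}) \<subseteq> X"
      using kX by (force simp: G_def norm_sgn)
    show "G z = f (sgn z)" if "norm z \<ge> 1" for z
    proof -
      have "z \<noteq> 0"
        using that by auto
      then show ?thesis
        using that k0 [of "sgn z"] by (simp add: G_def norm_sgn)
    qed
    show "G z = g (sgn z)" if "z \<noteq> 0" "norm z \<le> 1/2" for z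
      using that k1 [of "sgn z"] by (auto simp: G_def norm_sgn)
  qed
qed

lemma level_set_component_separates_annulus:
  fixes \<phi> :: "'a::euclidean_space \<Rightarrow> real"
  assumes "2 \<le> DIM('a)" and cont: "continuous_on (- {0}) \<phi>"
    and inner: "\<And>z. z \<noteq> 0 \<Longrightarrow> norm z \<le> 1/2 \<Longrightarrow> \<phi> z > t"
    and outer: "\<And>z. norm z \<ge> 1 \<Longrightarrow> \<phi> z < t"
  obtains C where "compact C" "connected C" "C \<noteq> {}" "C \<subseteq> cball 0 1 - ball 0 (1/2)"
    "\<And>z. z \<in> C \<Longrightarrow> \<phi> z = t"
    "\<And>z w. norm z < 1/2 \<Longrightarrow> norm w \<ge> 1 \<Longrightarrow> \<not> connected_component (- C) z w"
proof -
  define A where "A = cball (0::'a) 1 - ball 0 (1/2)"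
  define K where "K = {z \<in> A. \<phi> z = t}"
  have level_in_K: "z \<in> K" if "z \<noteq> 0" "\<phi> z = t" for z
    using that inner [of z] outer [of z] by (force simp: K_def A_def)
  have "continuous_on A \<phi>"
    by (rule continuous_on_subset [OF cont]) (auto simp: A_def)
  then have "closed K"
    unfolding K_def A_def by (intro continuous_closed_preimage_constant) auto
  moreover have "bounded K"
    by (rule bounded_subset [of "cball 0 1"]) (auto simp: K_def A_def)
  ultimately have "compact K"
    by (simp add: compact_eq_bounded_closed)
  obtain a b :: 'a where a: "norm a = 1/4" and b: "norm b = 1"
    using vector_choose_size by (metis zero_le_divide_1_iff zero_le_numeral zero_le_one)
  have "\<not> connected_component (- insert 0 K) a b"
  proof
    assume "connected_component (- insert 0 K) a b"
    then obtain T where T: "connected T" "T \<subseteq> - insert 0 K" "a \<in> T" "b \<in> T"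
      by (auto simp: connected_component_def)
    have "connected (\<phi> ` T)"
      using T(1,2) by (intro connected_continuous_image continuous_on_subset [OF cont]) auto
    moreover have "\<phi> b < t" "t < \<phi> a"
      using a b inner [of a] outer [of b] by force+
    ultimately have "t \<in> \<phi> ` T"
      using T(3,4) unfolding connected_iff_interval by (metis image_eqI less_imp_le)
    then show False
      using T(2) level_in_K by blast
  qed
  \<comment> \<open>\<open>\<phi>\<close> is only continuous off the origin, so the origin has to be added to the level set
    to separate; as \<open>- {0}\<close> is connected, \<open>K\<close> alone then separates too.\<close>
  moreover have "connected_component (- {0}) a b"
    using assms(1) a b connected_punctured_universe [of "0::'a"]
    by (force simp: connected_iff_connected_component)
  ultimately have "\<not> connected_component (- K) a b"
    using separation_by_Un_closed_pointwise [of "{0}" K a b] \<open>closed K\<close>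
    by (auto simp: K_def A_def)
  then obtain C where C: "C \<in> components K" and sep: "\<not> connected_component (- C) a b"
    using separation_by_component_closed_pointwise \<open>closed K\<close> by metis
  have "C \<subseteq> K"
    using C in_components_subset by blast
  show thesis
  proof
    show "compact C"
      using C \<open>closed K\<close> \<open>bounded K\<close> \<open>C \<subseteq> K\<close> closed_components bounded_subset
      by (metis compact_eq_bounded_closed)
    show "connected C" "C \<noteq> {}"
      using C in_components_connected in_components_nonempty by auto
    show "C \<subseteq> cball 0 1 - ball 0 (1/2)" "\<And>z. z \<in> C \<Longrightarrow> \<phi> z = t"
      using \<open>C \<subseteq> K\<close> by (auto simp: K_def A_def)
    show "\<not> connected_component (- C) z w" if z: "norm z < 1/2" and w: "norm w \<ge> 1" for z w
    proof
      assume "connected_component (- C) z w"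
      moreover have "connected_component (- C) a z"
        using z a \<open>C \<subseteq> K\<close>
        by (intro connected_componentI [of "ball 0 (1/2)"]) (auto simp: K_def A_def)
      moreover have "connected_component (- C) w b"
      proof (rule connected_componentI [of "- ball 0 1"])
        show "connected (- ball (0::'a) 1)"
          using assms(1) by (simp add: connected_complement_bounded_convex)
        show "- ball 0 1 \<subseteq> - C"
          using \<open>C \<subseteq> K\<close> outer by (force simp: K_def)
      qed (use w b in auto)
      ultimately show False
        using sep connected_component_trans by blast
    qed
  qed
qed

lemma AR_extend_outside_component:
  fixes G :: "'a::euclidean_space \<Rightarrow> 'b::euclidean_space"
  assumes "closed S" "closed C" "C \<subseteq> S" "R \<in> components (- C)"
    and contG: "continuous_on (C \<union> closure R) G" and "G ` C \<subseteq> Q" "AR Q"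
  obtains F where "continuous_on S F" "F ` S \<subseteq> Q \<union> G ` R" "\<And>z. z \<in> R \<Longrightarrow> F z = G z"
proof -
  have "open R"
    using assms(2,4) open_components by blast
  have "R \<inter> C = {}"
    using assms(4) in_components_subset by blast
  have frontier: "frontier R \<subseteq> C"
    using frontier_of_components_subset [OF assms(4)] assms(2)
    by (metis frontier_complement frontier_subset_closed order_trans)
  obtain e where conte: "continuous_on (S - R) e" and eQ: "e ` (S - R) \<subseteq> Q"
    and eG: "\<And>z. z \<in> C \<Longrightarrow> e z = G z"
  proof (rule AR_imp_absolute_extensor [OF \<open>AR Q\<close> _ \<open>G ` C \<subseteq> Q\<close>])
    show "continuous_on C G"
      using contG by (rule continuous_on_subset) auto
    show "closedin (top_of_set (S - R)) C"
      using assms(2,3) \<open>R \<inter> C = {}\<close> by (intro closed_subset) auto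
  qed auto
  define F where "F z = (if z \<in> R then G z else e z)" for z
  have "continuous_on (S \<inter> closure R) F"
  proof (rule continuous_on_eq)
    show "continuous_on (S \<inter> closure R) G"
      using contG by (rule continuous_on_subset) auto
    show "G z = F z" if "z \<in> S \<inter> closure R" for z
      using that frontier eG \<open>open R\<close> by (auto simp: F_def frontier_def interior_open)
  qed
  moreover have "continuous_on (S - R) F"
    using conte by (rule continuous_on_eq) (auto simp: F_def)
  moreover have "S = (S \<inter> closure R) \<union> (S - R)"
    using closure_subset by auto
  ultimately have "continuous_on S F"
    using assms(1) \<open>open R\<close> by (metis closed_Diff closed_Int closed_closure continuous_on_closed_Un)
  moreover have "F ` S \<subseteq> Q \<union> G ` R"
    using eQ by (auto simp: F_def)
  ultimately show thesis
    using that by (simp add: F_def)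
qed

lemma sphere_map_homotopic_across_punctured_sphere_imp_nullhomotopic:
  fixes f g :: "'m::euclidean_space \<Rightarrow> 'a::euclidean_space"
  assumes "2 \<le> DIM('m)" "DIM('a) = 2"
    and hom: "homotopic_with_canon (\<lambda>h. True) (sphere 0 1) X f g"
    and f_inside: "f ` sphere 0 1 \<subseteq> ball c r"
    and g_outside: "g ` sphere 0 1 \<inter> cball c r = {}"
    and p: "p \<in> sphere c r" "p \<notin> X"
  shows "\<exists>a. homotopic_with_canon (\<lambda>h. True) (sphere 0 1) X f (\<lambda>x. a)"
proof -
  obtain G where contG: "continuous_on (- {0}) G" and GX: "G ` (- {0}) \<subseteq> X"
    and Gf: "\<And>z. norm z \<ge> 1 \<Longrightarrow> G z = f (sgn z)"
    and Gg: "\<And>z. z \<noteq> 0 \<Longrightarrow> norm z \<le> 1/2 \<Longrightarrow> G z = g (sgn z)"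
    using homotopic_sphere_maps_imp_punctured_space_map [OF hom] by blast
  have outer: "dist c (G z) < r" if "norm z \<ge> 1" for z
  proof -
    have "z \<noteq> 0"
      using that by auto
    then show ?thesis
      using that f_inside Gf [OF that] by (force simp: norm_sgn)
  qed
  have inner: "dist c (G z) > r" if "z \<noteq> 0" "norm z \<le> 1/2" for z
    using that g_outside Gg [OF that] by (force simp: norm_sgn)
  have cont_dist: "continuous_on (- {0}) (\<lambda>z. dist c (G z))"
    using contG by (intro continuous_intros)
  obtain C where "compact C" "connected C" "C \<noteq> {}" and C_annulus: "C \<subseteq> cball 0 1 - ball 0 (1/2)"
    and C_level: "\<And>z. z \<in> C \<Longrightarrow> dist c (G z) = r"
    and C_sep: "\<And>z w. norm z < 1/2 \<Longrightarrow> norm w \<ge> 1 \<Longrightarrow> \<not> connected_component (- C) z w"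
    using level_set_component_separates_annulus [OF assms(1) cont_dist inner outer] by metis
  have "0 \<notin> C"
    using C_annulus by auto
  have "C \<subseteq> ball 0 1"
  proof
    fix z
    assume "z \<in> C"
    then have "\<not> dist c (G z) < r"
      using C_level by simp
    then show "z \<in> ball 0 1"
      using outer by (force simp: not_le)
  qed
  define Q where "Q = G ` C"
  have "Q \<subseteq> X"
    using GX \<open>0 \<notin> C\<close> by (auto simp: Q_def)
  have "AR Q"
  proof (rule compact_connected_punctured_sphere_imp_AR [OF assms(2) p(1)])
    show "Q \<subseteq> sphere c r - {p}"
      using C_level \<open>Q \<subseteq> X\<close> p(2) by (auto simp: Q_def)
    have "continuous_on C G"
      using \<open>0 \<notin> C\<close> by (intro continuous_on_subset [OF contG]) auto
    then show "compact Q" "connected Q"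
      using \<open>compact C\<close> \<open>connected C\<close> by (auto simp: Q_def compact_continuous_image connected_continuous_image)
    show "Q \<noteq> {}"
      using \<open>C \<noteq> {}\<close> by (simp add: Q_def)
  qed
  obtain w :: 'm where w: "norm w = 1"
    using vector_choose_size zero_le_one by blast
  define R where "R = connected_component_set (- C) w"
  have "w \<notin> C"
    using w \<open>C \<subseteq> ball 0 1\<close> by auto
  then have R: "R \<in> components (- C)"
    by (simp add: R_def componentsI)
  have "R \<inter> ball 0 (1/2) = {}"
    using C_sep w by (auto simp: R_def dest: connected_component_sym)
  then have "closure R \<inter> ball 0 (1/2) = {}"
    by (metis inf_commute open_Int_closure_eq_empty open_ball)
  then have "continuous_on (C \<union> closure R) G"
    using \<open>0 \<notin> C\<close> by (intro continuous_on_subset [OF contG]) auto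
  moreover have "C \<subseteq> cball 0 1"
    using \<open>C \<subseteq> ball 0 1\<close> by auto
  moreover have "G ` C \<subseteq> Q"
    by (simp add: Q_def)
  ultimately obtain F where contF: "continuous_on (cball 0 1) F" and FQ: "F ` cball 0 1 \<subseteq> Q \<union> G ` R"
    and FG: "\<And>z. z \<in> R \<Longrightarrow> F z = G z"
    using AR_extend_outside_component [OF closed_cball compact_imp_closed [OF \<open>compact C\<close>] _ R _ _ \<open>AR Q\<close>]
    by metis
  have "- ball 0 1 \<subseteq> R"
    unfolding R_def
  proof (rule connected_component_maximal)
    show "connected (- ball (0::'m) 1)"
      using assms(1) by (simp add: connected_complement_bounded_convex)
    show "- ball 0 1 \<subseteq> - C"
      using \<open>C \<subseteq> ball 0 1\<close> by blast
  qed (use w in auto)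
  then have "\<forall>z \<in> sphere 0 1. F z = f z"
    using FG Gf by (simp add: subset_iff sgn_div_norm)
  moreover have "0 \<notin> R"
    using \<open>R \<inter> ball 0 (1/2) = {}\<close> by auto
  then have "G ` R \<subseteq> X"
    using GX by auto
  then have "F ` cball 0 1 \<subseteq> X"
    using FQ \<open>Q \<subseteq> X\<close> by blast
  ultimately show ?thesis
    using contF nullhomotopic_from_sphere_extension by blast
qed

lemma homotopic_loops_Arg2pi_reparametrization:
  assumes "path p" "path_image p \<subseteq> S" "pathfinish p = pathstart p"
  shows "homotopic_loops S p
           (p \<circ> (\<lambda>z. Arg2pi z / (2 * pi)) \<circ> exp \<circ> (\<lambda>t. 2 * of_real pi * of_real t * \<i>))"
proof (rule homotopic_loops_eq [OF assms])
  fix t :: real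
  assume t: "t \<in> {0..1}"
  show "p t = (p \<circ> (\<lambda>z. Arg2pi z / (2 * pi)) \<circ> exp \<circ> (\<lambda>t. 2 * of_real pi * of_real t * \<i>)) t"
  proof (cases "t = 1")
    case True
    then show ?thesis
      using assms(3) Arg2pi_of_real [of 1] by (simp add: exp_two_pi_i pathstart_def pathfinish_def)
  next
    case False
    then have "Arg2pi (exp (2 * of_real pi * of_real t * \<i>)) = 2 * pi * t"
      using t by (subst Arg2pi_exp) auto
    then show ?thesis
      by simp
  qed
qed

lemma loop_homotopic_across_punctured_sphere_imp_nullhomotopic:
  fixes \<alpha> \<beta> :: "real \<Rightarrow> 'a::euclidean_space"
  assumes "DIM('a) = 2" and hom: "homotopic_loops X \<alpha> \<beta>"
    and "path_image \<alpha> \<subseteq> ball c r" "path_image \<beta> \<inter> cball c r = {}"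
    and p: "p \<in> sphere c r" "p \<notin> X"
  shows "\<exists>a. homotopic_loops X \<alpha> (\<lambda>t. a)"
proof -
  define A where "A z = Arg2pi z / (2 * pi)" for z
  have A: "(\<gamma> \<circ> A) ` sphere 0 1 \<subseteq> path_image \<gamma>" for \<gamma> :: "real \<Rightarrow> 'a"
    by (auto simp: A_def path_image_def Arg2pi_ge_0 Arg2pi_lt_2pi less_imp_le)
  have "homotopic_with_canon (\<lambda>h. True) (sphere 0 1) X (\<alpha> \<circ> A) (\<beta> \<circ> A)"
    unfolding A_def by (rule homotopic_loops_imp_homotopic_circlemaps [OF hom])
  moreover have "(\<alpha> \<circ> A) ` sphere 0 1 \<subseteq> ball c r" "(\<beta> \<circ> A) ` sphere 0 1 \<inter> cball c r = {}"
    using A [of \<alpha>] A [of \<beta>] assms(3,4) by blast+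
  ultimately obtain a where "homotopic_with_canon (\<lambda>h. True) (sphere 0 1) X (\<alpha> \<circ> A) (\<lambda>x. a)"
    using sphere_map_homotopic_across_punctured_sphere_imp_nullhomotopic [OF _ assms(1) _ _ _ p]
    by (metis DIM_complex order_refl)
  then have "homotopic_loops X (\<alpha> \<circ> A \<circ> exp \<circ> (\<lambda>t. 2 * of_real pi * of_real t * \<i>)) (\<lambda>t. a)"
    using homotopic_circlemaps_imp_homotopic_loops by (simp add: o_def)
  moreover have "homotopic_loops X \<alpha> (\<alpha> \<circ> A \<circ> exp \<circ> (\<lambda>t. 2 * of_real pi * of_real t * \<i>))"
    unfolding A_def using homotopic_loops_imp_loop [OF hom] homotopic_loops_imp_path [OF hom]
      homotopic_loops_imp_subset [OF hom]
    by (intro homotopic_loops_Arg2pi_reparametrization) auto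
  ultimately show ?thesis
    using homotopic_loops_trans by blast
qed

theorem lemmaA4:
  fixes X :: "(real^2) set" and c :: "real^2" and r :: real and \<alpha> :: "real \<Rightarrow> real^2"
  assumes "r > 0"
    and "\<not> sphere c r \<subseteq> X"
    and "essential X \<alpha>"
    and "path_image \<alpha> \<subseteq> X \<inter> ball c r"
  shows "\<not> (\<exists>\<beta>. homotopic_loops X \<alpha> \<beta> \<and> path_image \<beta> \<inter> (cball c r \<inter> X) = {})"
proof
  assume "\<exists>\<beta>. homotopic_loops X \<alpha> \<beta> \<and> path_image \<beta> \<inter> (cball c r \<inter> X) = {}"
  then obtain \<beta> where hom: "homotopic_loops X \<alpha> \<beta>" and "path_image \<beta> \<inter> (cball c r \<inter> X) = {}"
    by blast
  then have "path_image \<beta> \<inter> cball c r = {}"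
    using homotopic_loops_imp_subset [OF hom] by blast
  moreover obtain p where "p \<in> sphere c r" "p \<notin> X"
    using assms(2) by blast
  ultimately have "\<exists>a. homotopic_loops X \<alpha> (\<lambda>t. a)"
    using loop_homotopic_across_punctured_sphere_imp_nullhomotopic [OF _ hom] assms(4) by auto
  then show False
    using assms(3) by (simp add: essential_def)
qed

end
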